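(* Let $\theta>0$ be such that $\Lambda^*_\nu(\theta)=\ln 2$. Then for all $0\le x\le 1$, $$\Lambda^*_\nu(\theta x)\ge (\ln\cosh)^*(x)=\tfrac12\big[(1+x)\ln(1+x)+(1-x)\ln(1-x)\big].$$
   Context: $\nu$ is the symmetric exponential distribution on $\mathbb{R}$ with density $\frac12 e^{-|x|}$, and its Cramer transform is $\Lambda^*_\nu(x)=\sup_y\{xy-\ln\int e^{yz}d\nu(z)\}=\sqrt{x^2+1}-1-\ln\frac{\sqrt{x^2+1}+1}{2}$. $(\ln\cosh)^*$ is the Legendre transform $f^*(x)=\sup_y\{xy-f(y)\}$ of $\ln\cosh$; at $x=1$ it equals $\ln 2$ (with $0\ln 0=0$). *)

theory Defs
  imports "HOL-Analysis.Analysis"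
begin

definition nu :: "real measure" where
  "nu = density lborel (\<lambda>z. ennreal (exp (- \<bar>z\<bar>) / 2))"

text \<open>Values of y with infinite Laplace transform contribute minus infinity to the
  supremum, so they are excluded (only y with exp(y z) integrable are taken).\<close>
definition cramer_nu :: "real \<Rightarrow> real" where
  "cramer_nu x = Sup {x * y - ln (\<integral>z. exp (y * z) \<partial>nu) | y. integrable nu (\<lambda>z. exp (y * z))}"

definition lncosh_star :: "real \<Rightarrow> real" where
  "lncosh_star x = Sup {x * y - ln (cosh y) | y. True}"

end

theory Submission
  imports Defs "HOL-Analysis.Analysis"
begin

text \<open>Since \<open>\<integral> exp (y z) d\<nu> = 1 / (1 - y\<^sup>2)\<close> for \<open>\<bar>y\<bar> < 1\<close> (and is infinite otherwise),
  \<open>\<Lambda>\<^sup>*(a) = sup\<^bsub>\<bar>y\<bar> < 1\<^esub> (a y + ln (1 - y\<^sup>2))\<close>, and the supremum is attained at the root of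
  \<open>a (1 - y\<^sup>2) = 2 y\<close>; this gives the closed form, and \<open>\<Lambda>\<^sup>*(\<theta>) = ln 2\<close> forces \<open>\<theta>\<^sup>2 \<ge> 3\<close>.

  For fixed \<open>u\<close>, both \<open>x \<mapsto> x u - ln (cosh u)\<close> and \<open>x \<mapsto> \<theta> x y + ln (1 - y\<^sup>2) \<le> \<Lambda>\<^sup>*(\<theta> x)\<close> are
  affine, so it suffices to find \<open>y\<close> dominating at \<open>x = 0\<close> and \<open>x = 1\<close>. If \<open>cosh u\<close> is large, the
  maximiser for \<open>\<Lambda>\<^sup>*(\<theta>)\<close> works because \<open>u - ln (cosh u) \<le> ln 2 = \<Lambda>\<^sup>*(\<theta>)\<close>. Otherwise
  \<open>y = sqrt (1 - 1 / cosh u)\<close> matches at \<open>x = 0\<close>, and \<open>cosh u \<ge> 1 + u\<^sup>2 / 2\<close> together with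
  \<open>\<theta>\<^sup>2 \<ge> 3\<close> gives \<open>u \<le> \<theta> y\<close>. The Legendre transform of \<open>ln cosh\<close> on \<open>[0, 1]\<close> follows from
  Gibbs' inequality, with the supremum attained at \<open>artanh x\<close> for \<open>x < 1\<close>.\<close>

definition laplace_integrand :: "real \<Rightarrow> real \<Rightarrow> real" where
  "laplace_integrand y z = exp (- \<bar>z\<bar>) / 2 * exp (y * z)"

lemma laplace_integrand_reflect: "laplace_integrand y (- z) = laplace_integrand (- y) z"
  by (simp add: laplace_integrand_def)

lemma has_bochner_integral_laplace_integrand_nonneg:
  assumes "y < 1"
  shows "has_bochner_integral lborel (\<lambda>z. indicator {0..} z *\<^sub>R laplace_integrand y z)
           (1 / (2 * (1 - y)))"
proof -
  let ?g = "\<lambda>z::real. if z \<in> {0..} then exp (- (1 - y) * z) / 2 else 0"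
  have "((\<lambda>z. exp (- (1 - y) * z) / 2) has_integral (1 / (2 * (1 - y)))) {0..}"
    using has_integral_mult_left[OF has_integral_exp_minus_to_infinity[of "1 - y" 0], of "1/2"] assms
    by (simp add: divide_simps mult.commute)
  then have "(?g has_integral (1 / (2 * (1 - y)))) UNIV"
    by (subst has_integral_restrict_UNIV)
  then have "integral\<^sup>N lborel ?g = ennreal (1 / (2 * (1 - y)))"
    by (intro nn_integral_has_integral_lborel) auto
  moreover have eq: "(\<lambda>z. indicator {0..} z *\<^sub>R laplace_integrand y z) = ?g"
    by (auto simp: laplace_integrand_def fun_eq_iff indicator_def mult_exp_exp algebra_simps)
  ultimately show ?thesis
    unfolding eq by (intro has_bochner_integral_nn_integral) (use assms in auto)
qed

lemma has_bochner_integral_laplace_integrand: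
  assumes "\<bar>y\<bar> < 1"
  shows "has_bochner_integral lborel (laplace_integrand y) (1 / (1 - y\<^sup>2))"
proof -
  have pos: "has_bochner_integral lborel (\<lambda>z. indicator {0..} z *\<^sub>R laplace_integrand y z)
      (1 / (2 * (1 - y)))"
    using assms by (intro has_bochner_integral_laplace_integrand_nonneg) auto
  have reflect: "has_bochner_integral lborel (\<lambda>z. indicator {0..} z *\<^sub>R laplace_integrand (- y) z)
      (1 / (2 * (1 + y)))"
    using assms has_bochner_integral_laplace_integrand_nonneg[of "- y"] by auto
  have "\<And>z::real. indicator {..0} (- z) = (indicator {0..} z :: real)"
    by (auto split: split_indicator)
  then have neg: "has_bochner_integral lborel (\<lambda>z. indicator {..0} z *\<^sub>R laplace_integrand y z)
      (1 / (2 * (1 + y)))"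
    by (subst lborel_has_bochner_integral_real_affine_iff[where c="-1" and t=0])
       (use reflect in \<open>auto simp: laplace_integrand_reflect\<close>)
  have "has_bochner_integral lborel (laplace_integrand y) (1 / (2 * (1 - y)) + 1 / (2 * (1 + y)))"
    using has_bochner_integral_add[OF pos neg]
    by (rule has_bochner_integral_discrete_difference[where X="{0}", THEN iffD1, rotated 4])
       (auto split: split_indicator simp: laplace_integrand_def)
  moreover have "1 / (2 * (1 - y)) + 1 / (2 * (1 + y)) = 1 / (1 - y\<^sup>2)"
  proof -
    have "0 < 1 - y" "0 < 1 + y" "0 < 1 - y\<^sup>2"
      using assms by (auto simp: abs_square_less_1)
    then show ?thesis by (simp add: field_simps power2_eq_square)
  qed
  ultimately show ?thesis by simp
qed

lemma laplace_integrand_not_integrable: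
  assumes "1 \<le> y"
  shows "\<not> integrable lborel (laplace_integrand y)"
proof
  assume "integrable lborel (laplace_integrand y)"
  then have int: "integrable lborel (\<lambda>z. indicator {0..} z *\<^sub>R laplace_integrand y z)"
    by (intro integrable_mult_indicator) auto
  define I where "I = (\<integral>z. indicator {0..} z *\<^sub>R laplace_integrand y z \<partial>lborel)"
  define n where "n = 2 * \<bar>I\<bar> + 1"
  have "n / 2 = (\<integral>z. indicator {0..n} z / (2::real) \<partial>lborel)"
    unfolding n_def by (simp add: measure_lborel_Icc)
  also have "\<dots> \<le> I"
    unfolding I_def
  proof (rule integral_mono[OF _ int])
    show "integrable lborel (\<lambda>z. indicator {0..n} z / (2::real))"
      by (intro integrable_divide integrable_real_indicator) (auto simp: emeasure_lborel_Icc_eq)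
    fix z :: real
    have "1 \<le> exp ((y - 1) * z)" if "z \<ge> 0" using that assms by simp
    then show "indicator {0..n} z / 2 \<le> indicator {0..} z *\<^sub>R laplace_integrand y z"
      by (auto simp: laplace_integrand_def indicator_def mult_exp_exp algebra_simps)
  qed
  finally show False
    using abs_ge_self[of I] unfolding n_def by (simp add: field_simps)
qed

lemma integrable_laplace_integrand_iff:
  "integrable lborel (laplace_integrand y) \<longleftrightarrow> \<bar>y\<bar> < 1"
proof
  assume int: "integrable lborel (laplace_integrand y)"
  then have "integrable lborel (\<lambda>z. laplace_integrand y (0 + (-1) * z))"
    using lborel_integrable_real_affine_iff[of "-1" "laplace_integrand y" 0] by simp
  then have "integrable lborel (laplace_integrand (- y))"
    by (simp add: laplace_integrand_reflect)
  then show "\<bar>y\<bar> < 1"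
    using int laplace_integrand_not_integrable[of y] laplace_integrand_not_integrable[of "- y"]
    by linarith
qed (use has_bochner_integral_laplace_integrand integrable.intros in blast)

lemma integrable_nu_exp_iff: "integrable nu (\<lambda>z. exp (y * z)) \<longleftrightarrow> \<bar>y\<bar> < 1"
proof -
  have "integrable nu (\<lambda>z. exp (y * z)) \<longleftrightarrow>
      integrable lborel (\<lambda>z. (exp (- \<bar>z\<bar>) / 2) *\<^sub>R exp (y * z))"
    unfolding nu_def by (intro integrable_density) auto
  also have "\<dots> \<longleftrightarrow> integrable lborel (laplace_integrand y)"
    by (simp add: laplace_integrand_def[abs_def])
  finally show ?thesis
    by (simp add: integrable_laplace_integrand_iff)
qed

lemma integral_nu_exp:
  assumes "\<bar>y\<bar> < 1"
  shows "(\<integral>z. exp (y * z) \<partial>nu) = 1 / (1 - y\<^sup>2)"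
proof -
  have "(\<integral>z. exp (y * z) \<partial>nu) = (\<integral>z. (exp (- \<bar>z\<bar>) / 2) *\<^sub>R exp (y * z) \<partial>lborel)"
    unfolding nu_def by (intro integral_density) auto
  also have "\<dots> = integral\<^sup>L lborel (laplace_integrand y)"
    by (simp add: laplace_integrand_def[abs_def])
  also have "\<dots> = 1 / (1 - y\<^sup>2)"
    using has_bochner_integral_laplace_integrand[OF assms] by (rule has_bochner_integral_integral_eq)
  finally show ?thesis .
qed

lemma cramer_nu_eq_SUP: "cramer_nu a = (SUP y\<in>{-1<..<1}. a * y + ln (1 - y\<^sup>2))"
proof -
  have "{a * y - ln (\<integral>z. exp (y * z) \<partial>nu) | y. integrable nu (\<lambda>z. exp (y * z))}
      = (\<lambda>y. a * y - ln (\<integral>z. exp (y * z) \<partial>nu)) ` {-1<..<1}"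
    unfolding integrable_nu_exp_iff by (auto simp: abs_less_iff)
  also have "\<dots> = (\<lambda>y. a * y + ln (1 - y\<^sup>2)) ` {-1<..<1}"
    by (intro image_cong) (auto simp: integral_nu_exp ln_div abs_square_less_1)
  finally show ?thesis
    unfolding cramer_nu_def by simp
qed

lemma cramer_objective_le_abs: "\<bar>y :: real\<bar> < 1 \<Longrightarrow> a * y + ln (1 - y\<^sup>2) \<le> \<bar>a\<bar>"
proof -
  assume y: "\<bar>y\<bar> < 1"
  have "0 < 1 - y\<^sup>2"
    using y abs_square_less_1[of y] by simp
  then have "ln (1 - y\<^sup>2) \<le> 0"
    by simp
  moreover have "a * y \<le> \<bar>a\<bar>"
  proof -
    have "a * y \<le> \<bar>a\<bar> * \<bar>y\<bar>"
      by (metis abs_ge_self abs_mult)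
    also have "\<dots> \<le> \<bar>a\<bar>"
      using y by (simp add: mult_left_le)
    finally show ?thesis .
  qed
  ultimately show ?thesis by linarith
qed

lemma cramer_nu_ge: "\<bar>y :: real\<bar> < 1 \<Longrightarrow> a * y + ln (1 - y\<^sup>2) \<le> cramer_nu a"
  unfolding cramer_nu_eq_SUP
  by (rule cSUP_upper2[where x=y]) (auto intro!: bdd_aboveI2 cramer_objective_le_abs simp: abs_less_iff)

lemma cramer_objective_le_critical:
  fixes a c y :: real
  assumes c: "\<bar>c\<bar> < 1" and crit: "a * (1 - c\<^sup>2) = 2 * c" and y: "\<bar>y\<bar> < 1"
  shows "a * y + ln (1 - y\<^sup>2) \<le> a * c + ln (1 - c\<^sup>2)"
proof -
  have pos: "0 < 1 - y" "0 < 1 + y" "0 < 1 - c" "0 < 1 + c"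
    using c y by linarith+
  have "ln ((1 - y) / (1 - c)) \<le> (1 - y) / (1 - c) - 1"
    and "ln ((1 + y) / (1 + c)) \<le> (1 + y) / (1 + c) - 1"
    using pos by (auto intro: ln_le_minus_one)
  moreover have "(1 - y) / (1 - c) - 1 + ((1 + y) / (1 + c) - 1) = a * (c - y)"
  proof -
    have "(1 - c) * (1 + c) \<noteq> 0"
      using pos by simp
    then have "a = 2 * c / ((1 - c) * (1 + c))"
      using crit by (simp add: eq_divide_eq power2_eq_square algebra_simps)
    then show ?thesis using pos by (simp add: field_simps)
  qed
  moreover have "ln (1 - t\<^sup>2) = ln (1 - t) + ln (1 + t)" if "\<bar>t\<bar> < 1" for t :: real
  proof -
    have "1 - t\<^sup>2 = (1 - t) * (1 + t)"
      by (simp add: algebra_simps power2_eq_square)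
    then show ?thesis
      using that by (simp add: ln_mult abs_less_iff)
  qed
  ultimately show ?thesis
    using pos c y by (simp add: ln_div algebra_simps)
qed

lemma cramer_nu_critical:
  fixes c :: real
  assumes "\<bar>c\<bar> < 1" and "a * (1 - c\<^sup>2) = 2 * c"
  shows "cramer_nu a = a * c + ln (1 - c\<^sup>2)"
  unfolding cramer_nu_eq_SUP
proof (rule antisym)
  show "(SUP y\<in>{-1<..<1}. a * y + ln (1 - y\<^sup>2)) \<le> a * c + ln (1 - c\<^sup>2)"
    using assms by (intro cSUP_least) (auto intro: cramer_objective_le_critical simp: abs_less_iff)
  show "a * c + ln (1 - c\<^sup>2) \<le> (SUP y\<in>{-1<..<1}. a * y + ln (1 - y\<^sup>2))"
    using cramer_nu_ge[OF assms(1)] unfolding cramer_nu_eq_SUP .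
qed

text \<open>The stationarity condition \<open>a (1 - c\<^sup>2) = 2 c\<close> is a quadratic in \<open>c\<close> whose root in
  \<open>(-1, 1)\<close> is \<open>a / (1 + sqrt (a\<^sup>2 + 1))\<close>.\<close>
lemma cramer_nu_critical_point:
  fixes a :: real
  defines "s \<equiv> sqrt (a\<^sup>2 + 1)"
  defines "c \<equiv> a / (s + 1)"
  shows "\<bar>c\<bar> < 1" and "1 - c\<^sup>2 = 2 / (s + 1)" and "a * c = s - 1"
    and "cramer_nu a = a * c + ln (1 - c\<^sup>2)"
proof -
  have s0: "0 \<le> s"
    by (simp add: s_def)
  have "s\<^sup>2 = a\<^sup>2 + 1"
    by (simp add: s_def)
  then have a2: "a\<^sup>2 = (s - 1) * (s + 1)"
    by (simp add: power2_eq_square algebra_simps)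
  have "\<bar>a\<bar> < s"
    unfolding s_def by (simp add: real_less_rsqrt)
  then show c: "\<bar>c\<bar> < 1"
    using s0 by (simp add: c_def abs_divide divide_less_eq)
  have "a * c = a\<^sup>2 / (s + 1)"
    by (simp add: c_def power2_eq_square)
  also have "\<dots> = s - 1"
    using s0 by (simp add: a2)
  finally show "a * c = s - 1" .
  have "c\<^sup>2 = (s - 1) * (s + 1) / (s + 1)\<^sup>2"
    by (simp only: c_def power_divide a2)
  also have "\<dots> = (s - 1) / (s + 1)"
    using s0 by (simp add: power2_eq_square)
  finally show one_minus_c2: "1 - c\<^sup>2 = 2 / (s + 1)"
    using s0 by (simp add: field_simps)
  have "a * (1 - c\<^sup>2) = 2 * c"
    unfolding one_minus_c2 by (simp add: c_def)
  then show "cramer_nu a = a * c + ln (1 - c\<^sup>2)"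
    by (rule cramer_nu_critical[OF c])
qed

lemma cramer_nu_closed_form:
  "cramer_nu a = sqrt (a\<^sup>2 + 1) - 1 - ln ((sqrt (a\<^sup>2 + 1) + 1) / 2)"
proof -
  define s where "s = sqrt (a\<^sup>2 + 1)"
  have "0 < s + 1"
    by (simp add: s_def add_nonneg_pos)
  then have "ln (2 / (s + 1)) = - ln ((s + 1) / 2)"
    by (simp add: ln_div)
  then show ?thesis
    using cramer_nu_critical_point[of a, folded s_def] by (simp add: s_def)
qed

lemma sinh_ge_self:
  assumes "0 \<le> v"
  shows "v \<le> sinh (v :: real)"
proof -
  have "(\<lambda>t. sinh t - t) 0 \<le> (\<lambda>t. sinh t - t) v"
    by (rule DERIV_nonneg_imp_nondecreasing[OF assms])
       (auto intro!: exI derivative_eq_intros simp: cosh_real_ge_1)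
  then show ?thesis by simp
qed

lemma cosh_ge_one_plus_half_square: "1 + u\<^sup>2 / 2 \<le> cosh (u :: real)"
proof -
  have "(\<lambda>t. cosh t - t\<^sup>2 / 2) 0 \<le> (\<lambda>t. cosh t - t\<^sup>2 / 2) \<bar>u\<bar>"
    by (rule DERIV_nonneg_imp_nondecreasing[OF abs_ge_zero])
       (auto intro!: exI derivative_eq_intros simp: sinh_ge_self)
  then show ?thesis by simp
qed

lemma two_le_if_ln_succ_le:
  fixes s :: real
  assumes "0 \<le> s" and "ln (s + 1) \<le> s - 1"
  shows "2 \<le> s"
proof (rule ccontr)
  assume "\<not> 2 \<le> s"
  then have "3 \<le> (3 - s) * (s + 1)"
    using assms(1) mult_nonneg_nonneg[of s "2 - s"] by (simp add: algebra_simps)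
  then have "3 / (s + 1) \<le> 3 - s"
    using assms(1) by (simp add: divide_le_eq)
  note ln3_gt_1
  also have "ln 3 \<le> ln (s + 1) + (3 / (s + 1) - 1)"
    using ln_le_minus_one[of "3 / (s + 1)"] assms(1) by (simp add: ln_div)
  also have "\<dots> \<le> 1"
    using assms(2) \<open>3 / (s + 1) \<le> 3 - s\<close> by simp
  finally show False by simp
qed

lemma ln_cosh_eq: "ln (cosh y) = y + ln (1 + exp (- 2 * y)) - ln (2 :: real)"
proof -
  have "cosh y = exp y * (1 + exp (- 2 * y)) / 2"
    by (simp add: cosh_field_def algebra_simps flip: exp_add)
  moreover have "0 < 1 + exp (- 2 * y)"
    by (simp add: add_pos_pos)
  ultimately show ?thesis
    by (simp only: ln_div ln_mult) simp_all
qed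

lemma mult_ln_le_diff:
  fixes p q :: real
  assumes "0 \<le> p" and "0 < q"
  shows "p * ln q - p * ln p \<le> q - p"
proof (cases "p = 0")
  case False
  then have "p * ln (q / p) \<le> p * (q / p - 1)"
    using assms by (intro mult_left_mono ln_le_minus_one) auto
  then show ?thesis
    using assms False by (simp add: ln_div algebra_simps)
qed (use assms in simp)

lemma binary_gibbs_inequality:
  fixes p p' q q' :: real
  assumes "0 \<le> p" "0 \<le> p'" "p + p' = 1" and "0 < q" "0 < q'" "q + q' = 1"
  shows "p * ln q + p' * ln q' \<le> p * ln p + p' * ln p'"
  using mult_ln_le_diff[of p q] mult_ln_le_diff[of p' q'] assms by linarith

lemma lncosh_affine_le:
  fixes x y :: real
  assumes "0 \<le> x" "x \<le> 1"
  shows "x * y - ln (cosh y) \<le> ((1 + x) * ln (1 + x) + (1 - x) * ln (1 - x)) / 2"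
proof -
  txt \<open>With \<open>q = 1 / (1 + exp (- 2 y))\<close>, the left-hand side minus \<open>ln 2\<close> is the cross entropy of
    \<open>((1 + x) / 2, (1 - x) / 2)\<close> relative to \<open>(q, 1 - q)\<close>; Gibbs' inequality bounds it by the entropy.\<close>
  define E where "E = exp (- 2 * y)"
  define q where "q = 1 / (1 + E)"
  have E: "0 < E" unfolding E_def by simp
  have q: "0 < q" "q < 1" "1 - q = E / (1 + E)"
    using E by (simp_all add: q_def field_simps)
  have "x * y - ln (cosh y) - ln 2 = (1 + x) / 2 * ln q + (1 - x) / 2 * ln (1 - q)"
    using E add_pos_pos[OF zero_less_one E] unfolding ln_cosh_eq q(3) q_def
    by (simp add: ln_div E_def field_simps)
  also have "\<dots> \<le> (1 + x) / 2 * ln ((1 + x) / 2) + (1 - x) / 2 * ln ((1 - x) / 2)"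
    using assms q(1,2) by (intro binary_gibbs_inequality) (auto simp: field_simps)
  also have "\<dots> = ((1 + x) * ln (1 + x) + (1 - x) * ln (1 - x)) / 2 - ln 2"
  proof -
    have "(1 - x) / 2 * ln ((1 - x) / 2) = (1 - x) / 2 * ln (1 - x) - (1 - x) / 2 * ln 2"
      using assms by (cases "x = 1") (simp_all add: ln_div algebra_simps)
    then show ?thesis
      using assms by (simp add: ln_div field_simps)
  qed
  finally show ?thesis by simp
qed

lemma lncosh_affine_at_artanh:
  fixes x :: real
  assumes "0 \<le> x" "x < 1"
  defines "y \<equiv> (ln (1 + x) - ln (1 - x)) / 2"
  shows "x * y - ln (cosh y) = ((1 + x) * ln (1 + x) + (1 - x) * ln (1 - x)) / 2"
proof -
  have "exp (- 2 * y) = exp (ln (1 - x) - ln (1 + x))"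
    unfolding y_def by (simp add: field_simps)
  also have "\<dots> = (1 - x) / (1 + x)"
    using assms by (simp add: exp_diff)
  finally have "1 + exp (- 2 * y) = 2 / (1 + x)"
    using assms by (simp add: field_simps)
  then have "ln (cosh y) = y - ln (1 + x)"
    unfolding ln_cosh_eq using assms by (simp add: ln_div)
  then show ?thesis
    unfolding y_def by (simp add: field_simps)
qed

lemma lncosh_affine_one_tends_ln2:
  assumes "b < ln 2"
  obtains y :: real where "b < y - ln (cosh y)"
proof -
  define d where "d = (ln 2 - b) / 2"
  define y where "y = - ln (exp d - 1) / 2"
  have "0 < d" using assms by (simp add: d_def)
  then have "exp (- 2 * y) = exp d - 1"
    by (simp add: y_def)
  then have "y - ln (cosh y) = ln 2 - d"
    unfolding ln_cosh_eq by simp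
  then show ?thesis
    using assms by (intro that[of y]) (simp add: d_def field_simps)
qed

lemma lncosh_star_eq:
  fixes x :: real
  assumes "0 \<le> x" "x \<le> 1"
  shows "lncosh_star x = ((1 + x) * ln (1 + x) + (1 - x) * ln (1 - x)) / 2"
  unfolding lncosh_star_def
proof (rule cSup_eq_non_empty)
  fix s assume "s \<in> {x * y - ln (cosh y) |y. True}"
  then show "s \<le> ((1 + x) * ln (1 + x) + (1 - x) * ln (1 - x)) / 2"
    using lncosh_affine_le[OF assms] by auto
next
  fix b assume b: "\<And>s. s \<in> {x * y - ln (cosh y) |y. True} \<Longrightarrow> s \<le> b"
  then have b_ge: "x * y - ln (cosh y) \<le> b" for y
    by blast
  show "((1 + x) * ln (1 + x) + (1 - x) * ln (1 - x)) / 2 \<le> b"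
  proof (cases "x < 1")
    case True
    then show ?thesis
      using b_ge lncosh_affine_at_artanh[OF assms(1) True] by metis
  next
    case False
    then have "x = 1" using assms by simp
    show ?thesis
    proof (rule ccontr)
      assume "\<not> ?thesis"
      then obtain y where "b < y - ln (cosh y)"
        using lncosh_affine_one_tends_ln2[of b] \<open>x = 1\<close> by (auto simp: not_le)
      then show False
        using b_ge[of y] \<open>x = 1\<close> by simp
    qed
  qed
qed auto

lemma cramer_nu_ln2_imp_square_ge:
  fixes \<theta> :: real
  assumes "ln 2 \<le> cramer_nu \<theta>"
  shows "3 \<le> \<theta>\<^sup>2"
proof -
  define s where "s = sqrt (\<theta>\<^sup>2 + 1)"
  have "0 \<le> s" by (simp add: s_def)
  have "ln 2 \<le> s - 1 - ln ((s + 1) / 2)"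
    using assms unfolding cramer_nu_closed_form s_def .
  moreover have "ln ((s + 1) / 2) = ln (s + 1) - ln 2"
    using \<open>0 \<le> s\<close> by (simp add: ln_div)
  ultimately have "ln (s + 1) \<le> s - 1"
    by simp
  with \<open>0 \<le> s\<close> have "2 \<le> s"
    by (rule two_le_if_ln_succ_le)
  then have "2\<^sup>2 \<le> s\<^sup>2"
    by (intro power_mono) auto
  then show ?thesis
    by (simp add: s_def)
qed

lemma abs_le_mult_sqrt_one_minus_inverse_cosh:
  fixes \<theta> u :: real
  assumes "0 < \<theta>" "3 \<le> \<theta>\<^sup>2" "2 * cosh u < sqrt (\<theta>\<^sup>2 + 1) + 1"
  shows "\<bar>u\<bar> \<le> \<theta> * sqrt (1 - 1 / cosh u)"
proof -
  define s where "s = sqrt (\<theta>\<^sup>2 + 1)"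
  define K where "K = cosh u"
  have K: "1 \<le> K" "0 < K"
    using cosh_real_ge_1[of u] by (simp_all add: K_def)
  have "2 \<le> s"
    unfolding s_def using assms(2) by (intro real_le_rsqrt) simp
  have "u\<^sup>2 \<le> 2 * (K - 1)"
    using cosh_ge_one_plus_half_square[of u] by (simp add: K_def)
  also have "\<dots> \<le> 2 * (s - 1) * (K - 1)"
    using \<open>2 \<le> s\<close> K by (intro mult_right_mono) auto
  also have "\<dots> \<le> (s - 1) * (s + 1) * (K - 1) / K"
  proof -
    have "(s - 1) * (K - 1) * (2 * K) \<le> (s - 1) * (K - 1) * (s + 1)"
      using \<open>2 \<le> s\<close> K assms(3) by (intro mult_left_mono) (auto simp: s_def K_def)
    then show ?thesis
      using K by (simp add: le_divide_eq algebra_simps)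
  qed
  also have "\<dots> = \<theta>\<^sup>2 * (1 - 1 / K)"
  proof -
    have "s\<^sup>2 = \<theta>\<^sup>2 + 1"
      by (simp add: s_def)
    then have "(s - 1) * (s + 1) = \<theta>\<^sup>2"
      by (simp add: power2_eq_square algebra_simps)
    then show ?thesis
      using K by (simp only:) (simp add: field_simps)
  qed
  also have "\<dots> = (\<theta> * sqrt (1 - 1 / K))\<^sup>2"
    using K by (simp add: power_mult_distrib)
  finally have "\<bar>u\<bar>\<^sup>2 \<le> (\<theta> * sqrt (1 - 1 / K))\<^sup>2"
    by simp
  then show ?thesis
    unfolding K_def by (rule power2_le_imp_le) (use assms(1) cosh_real_ge_1[of u] in simp)
qed

lemma cramer_nu_endpoint_witness:
  fixes \<theta> u :: real
  assumes "0 < \<theta>" "3 \<le> \<theta>\<^sup>2" "ln 2 \<le> cramer_nu \<theta>"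
  shows "\<exists>y. \<bar>y\<bar> < 1 \<and> - ln (cosh u) \<le> ln (1 - y\<^sup>2) \<and>
             \<bar>u\<bar> - ln (cosh u) \<le> \<theta> * y + ln (1 - y\<^sup>2)"
proof (cases "sqrt (\<theta>\<^sup>2 + 1) + 1 \<le> 2 * cosh u")
  case True
  define s where "s = sqrt (\<theta>\<^sup>2 + 1)"
  define c where "c = \<theta> / (s + 1)"
  note crit = cramer_nu_critical_point[of \<theta>, folded s_def, folded c_def]
  have "0 < s + 1"
    by (simp add: s_def add_nonneg_pos)
  then have "1 / cosh u \<le> 1 - c\<^sup>2"
    using True unfolding crit(2) s_def[symmetric] by (simp add: field_simps)
  moreover have "0 < 1 / cosh u"
    by simp
  ultimately have "ln (1 / cosh u) \<le> ln (1 - c\<^sup>2)"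
    by (subst ln_le_cancel_iff) linarith+
  moreover have "\<bar>u\<bar> - ln (cosh u) \<le> ln 2"
    using ln_cosh_eq[of "\<bar>u\<bar>"] by simp
  ultimately show ?thesis
    using crit(1,4) assms(3) by (intro exI[of _ c]) (auto simp: ln_div)
next
  case False
  define y where "y = sqrt (1 - 1 / cosh u)"
  have "0 \<le> 1 - 1 / cosh u"
    using cosh_real_ge_1[of u] by simp
  then have "ln (1 - y\<^sup>2) = - ln (cosh u)" and "\<bar>y\<bar> < 1"
    by (simp_all add: y_def ln_div)
  moreover have "\<bar>u\<bar> \<le> \<theta> * y"
    unfolding y_def using assms(1,2) False by (intro abs_le_mult_sqrt_one_minus_inverse_cosh) auto
  ultimately show ?thesis
    by (intro exI[of _ y]) auto
qed

lemma lncosh_affine_le_cramer_nu: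
  fixes \<theta> x u :: real
  assumes "0 < \<theta>" "ln 2 \<le> cramer_nu \<theta>" "0 \<le> x" "x \<le> 1"
  shows "x * u - ln (cosh u) \<le> cramer_nu (\<theta> * x)"
proof -
  obtain y where y: "\<bar>y\<bar> < 1" "- ln (cosh u) \<le> ln (1 - y\<^sup>2)"
      "\<bar>u\<bar> - ln (cosh u) \<le> \<theta> * y + ln (1 - y\<^sup>2)"
    using cramer_nu_endpoint_witness[OF assms(1) cramer_nu_ln2_imp_square_ge[OF assms(2)] assms(2)]
    by blast
  have "x * u \<le> x * \<bar>u\<bar>"
    using assms(3) by (intro mult_left_mono) auto
  then have "x * u - ln (cosh u) \<le> x * (\<bar>u\<bar> - ln (cosh u)) + (1 - x) * (- ln (cosh u))"
    by (simp add: algebra_simps)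
  also have "\<dots> \<le> x * (\<theta> * y + ln (1 - y\<^sup>2)) + (1 - x) * ln (1 - y\<^sup>2)"
    using y assms(3,4) by (intro add_mono mult_left_mono) auto
  also have "\<dots> = (\<theta> * x) * y + ln (1 - y\<^sup>2)"
    by (simp add: algebra_simps)
  also have "\<dots> \<le> cramer_nu (\<theta> * x)"
    by (rule cramer_nu_ge[OF y(1)])
  finally show ?thesis .
qed

theorem lemma6:
  fixes \<theta> :: real
  assumes "\<theta> > 0" and "cramer_nu \<theta> = ln 2"
  shows "\<forall>x::real. 0 \<le> x \<and> x \<le> 1 \<longrightarrow>
           cramer_nu (\<theta> * x) \<ge> lncosh_star x \<and>
           lncosh_star x = ((1 + x) * ln (1 + x) + (1 - x) * ln (1 - x)) / 2"
proof (intro allI impI conjI)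
  fix x :: real
  assume x: "0 \<le> x \<and> x \<le> 1"
  show "lncosh_star x \<le> cramer_nu (\<theta> * x)"
    unfolding lncosh_star_def
    using lncosh_affine_le_cramer_nu[of \<theta> x] assms x by (intro cSup_least) auto
  show "lncosh_star x = ((1 + x) * ln (1 + x) + (1 - x) * ln (1 - x)) / 2"
    using x by (intro lncosh_star_eq) auto
qed

end
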